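(* Let $p\in\mathbb{C}$. Suppose that \[ e^{pz}K(\sqrt z)=\frac\pi2\sum_{n=0}^\infty u_nz^n,\qquad |z|<1. \] Then $u_0=1$, $u_1=\frac14(4p+1)$, $u_2=\frac1{64}(32p^2+16p+9)$, and for all integers $n\ge2$, \[ u_{n+1}=\frac{(2n+1)(2n+4p+1)}{4(n+1)^2}u_n-\frac{p(2n+p)}{(n+1)^2}u_{n-1}+\frac{p^2}{(n+1)^2}u_{n-2}. \]
   Context: $K$ denotes the complete elliptic integral of the first kind, $K(r)=\int_0^{\pi/2}\frac{dt}{\sqrt{1-r^2\sin^2t}}$; for complex $|z|<1$, $K(\sqrt z)$ is understood as $\frac\pi2F(\tfrac12,\tfrac12;1;z)$, where $F(a,b;c;z)=\sum_{n=0}^\infty\frac{(a)_n(b)_n}{(c)_n\,n!}z^n$ is the Gaussian hypergeometric function and $(a)_n=a(a+1)\cdots(a+n-1)$, $(a)_0=1$. *)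

theory Defs
  imports "HOL-Analysis.Analysis"
begin

definition hypergeom2F1 :: "complex \<Rightarrow> complex \<Rightarrow> complex \<Rightarrow> complex \<Rightarrow> complex" where
  "hypergeom2F1 a b c z =
     (\<Sum>n. pochhammer a n * pochhammer b n / (pochhammer c n * of_nat (fact n)) * z ^ n)"

text \<open>K(sqrt z) for complex |z| < 1, understood as (pi/2) F(1/2,1/2;1;z).\<close>
definition ellK_sqrt :: "complex \<Rightarrow> complex" where
  "ellK_sqrt z = of_real (pi / 2) * hypergeom2F1 (1/2) (1/2) 1 z"

end

theory Submission
  imports Defs "HOL-Complex_Analysis.Laurent_Convergence"
begin

text \<open>The series F = F(a,b;c;z) satisfies the hypergeometric equation
  z(1 - z) F'' + (c - (a + b + 1) z) F' - a b F = 0, which is just the two-term recurrence of its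
  coefficients. Since (e^{pz} G)' = e^{pz} (G' + p G), the product U = e^{pz} F satisfies the
  equation obtained by replacing F' and F'' with U' - p U and U'' - 2p U' + p^2 U. Its coefficients
  are polynomials of degree at most two, so comparing coefficients of z^n links u_{n+1}, u_n,
  u_{n-1} and u_{n-2}. For a = b = 1/2 and c = 1 the u_n are indeed the Taylor coefficients of U,
  by uniqueness of power series expansions, and u_0, u_1, u_2 come from the Cauchy product.\<close>

definition hypergeom2F1_coeff :: "'a::field_char_0 \<Rightarrow> 'a \<Rightarrow> 'a \<Rightarrow> nat \<Rightarrow> 'a" where
  "hypergeom2F1_coeff a b c n = pochhammer a n * pochhammer b n / (pochhammer c n * of_nat (fact n))"

lemma hypergeom2F1_coeff_0 [simp]: "hypergeom2F1_coeff a b c 0 = 1"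
  by (simp add: hypergeom2F1_coeff_def)

lemma hypergeom2F1_coeff_Suc:
  assumes "c \<notin> \<int>\<^sub>\<le>\<^sub>0"
  shows "(of_nat n + 1) * (of_nat n + c) * hypergeom2F1_coeff a b c (Suc n)
         = (of_nat n + a) * (of_nat n + b) * hypergeom2F1_coeff a b c n"
proof -
  let ?k = "(of_nat n + 1) * (of_nat n + c)"
  have "?k \<noteq> 0"
    using assms by (auto simp: add.commute dest: plus_of_nat_eq_0_imp simp flip: of_nat_Suc)
  have "hypergeom2F1_coeff a b c (Suc n)
      = (of_nat n + a) * (of_nat n + b) * (pochhammer a n * pochhammer b n)
        / (?k * (pochhammer c n * of_nat (fact n)))"
    by (simp add: hypergeom2F1_coeff_def pochhammer_rec' algebra_simps)
  with \<open>?k \<noteq> 0\<close> show ?thesis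
    by (simp add: hypergeom2F1_coeff_def)
qed

lemma hypergeom2F1_fps_ode:
  fixes a b c :: "'a::field_char_0"
  defines "F \<equiv> Abs_fps (hypergeom2F1_coeff a b c)"
  assumes "c \<notin> \<int>\<^sub>\<le>\<^sub>0"
  shows "fps_X * (1 - fps_X) * fps_deriv (fps_deriv F)
         + (fps_const c - fps_const (a + b + 1) * fps_X) * fps_deriv F - fps_const (a * b) * F = 0"
proof (rule fps_ext)
  fix n
  show "fps_nth (fps_X * (1 - fps_X) * fps_deriv (fps_deriv F)
         + (fps_const c - fps_const (a + b + 1) * fps_X) * fps_deriv F - fps_const (a * b) * F) n = fps_nth 0 n"
    using hypergeom2F1_coeff_Suc[OF assms(2), of n a b]
    by (cases n) (simp_all add: F_def algebra_simps)
qed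

lemma fps_exp_mult_deriv:
  fixes p :: "'a::field_char_0"
  shows "fps_exp p * fps_deriv F = fps_deriv (fps_exp p * F) - fps_const p * (fps_exp p * F)"
  by (simp add: algebra_simps)

lemma fps_exp_times_hypergeom2F1_rec:
  fixes a b c p :: "'a::field_char_0"
  assumes c: "c \<notin> \<int>\<^sub>\<le>\<^sub>0"
    and u: "Abs_fps u = fps_exp p * Abs_fps (hypergeom2F1_coeff a b c)"
    and n: "2 \<le> n"
  shows "(of_nat n + 1) * (of_nat n + c) * u (n + 1)
         = ((of_nat n + a) * (of_nat n + b) + p * (2 * of_nat n + c)) * u n
           - p * (2 * of_nat n + a + b - 1 + p) * u (n - 1) + p\<^sup>2 * u (n - 2)"
proof -
  define U where "U = Abs_fps u"
  define F where "F = Abs_fps (hypergeom2F1_coeff a b c)"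
  define G where "G = fps_deriv U - fps_const p * U"
  define H where "H = fps_deriv G - fps_const p * G"
  have G: "G = fps_exp p * fps_deriv F" and H: "H = fps_exp p * fps_deriv (fps_deriv F)"
    by (simp_all only: G_def H_def fps_exp_mult_deriv U_def u F_def)
  have "fps_X * (1 - fps_X) * H + (fps_const c - fps_const (a + b + 1) * fps_X) * G - fps_const (a * b) * U
        = fps_exp p * (fps_X * (1 - fps_X) * fps_deriv (fps_deriv F)
           + (fps_const c - fps_const (a + b + 1) * fps_X) * fps_deriv F - fps_const (a * b) * F)"
    by (simp add: G H U_def u F_def algebra_simps)
  also have "\<dots> = 0"
    using hypergeom2F1_fps_ode[OF c] by (simp add: F_def)
  finally have ode: "fps_X * (1 - fps_X) * H + (fps_const c - fps_const (a + b + 1) * fps_X) * G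
                     - fps_const (a * b) * U = 0" .
  have Gn: "fps_nth G k = of_nat (k + 1) * u (k + 1) - p * u k" for k
    by (simp add: G_def U_def)
  have Hn: "fps_nth H k = of_nat (k + 1) * fps_nth G (k + 1) - p * fps_nth G k" for k
    by (simp add: H_def)
  obtain m where m: "n = m + 2"
    using n by (metis add.commute le_Suc_ex)
  have "fps_nth (fps_X * (1 - fps_X) * H + (fps_const c - fps_const (a + b + 1) * fps_X) * G
                 - fps_const (a * b) * U) (m + 2) = 0"
    by (simp add: ode)
  then have "fps_nth H (m + 1) - fps_nth H m + c * fps_nth G (m + 2) - (a + b + 1) * fps_nth G (m + 1)
             - a * b * u (m + 2) = 0"
    by (simp add: ring_distribs mult.assoc fps_mult_left_const_nth U_def numeral_2_eq_2 algebra_simps)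
  then show ?thesis
    unfolding Hn Gn by (simp add: m algebra_simps eval_nat_numeral power2_eq_square)
qed

abbreviation ellK_coeff :: "nat \<Rightarrow> complex" where
  "ellK_coeff \<equiv> hypergeom2F1_coeff (1/2) (1/2) 1"

lemma norm_ellK_coeff_le_1:
  "norm (ellK_coeff n) \<le> 1"
proof (induction n)
  case 0
  show ?case by simp
next
  case (Suc n)
  let ?r = "(real n + 1/2) / (real n + 1)"
  have "(of_nat n + 1) * (of_nat n + 1) * ellK_coeff (Suc n) = (of_nat n + 1/2) * (of_nat n + 1/2) * ellK_coeff n"
    using hypergeom2F1_coeff_Suc[of 1 n "1/2" "1/2"] by simp
  then have "ellK_coeff (Suc n) = (of_real ?r)\<^sup>2 * ellK_coeff n"
    by (simp add: field_simps power2_eq_square flip: of_nat_Suc)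
  then have "norm (ellK_coeff (Suc n)) = ?r\<^sup>2 * norm (ellK_coeff n)"
    by (simp only: norm_mult norm_power norm_of_real power2_abs)
  also have "\<dots> \<le> 1 * 1"
    using Suc.IH by (intro mult_mono power_le_one) auto
  finally show ?case by simp
qed

lemma ellK_coeff_sums:
  fixes z :: complex
  assumes "norm z < 1"
  shows "(\<lambda>n. ellK_coeff n * z ^ n) sums hypergeom2F1 (1/2) (1/2) 1 z"
proof -
  have "summable (\<lambda>n. ellK_coeff n * z ^ n)"
  proof (rule summable_comparison_test'[where N = 0])
    show "summable (\<lambda>n. norm z ^ n)"
      using assms by (simp add: summable_geometric)
    show "norm (ellK_coeff n * z ^ n) \<le> norm z ^ n" for n
      using norm_ellK_coeff_le_1[of n]
      by (simp add: norm_mult norm_power mult_left_le_one_le)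
  qed
  then show ?thesis
    by (simp add: hypergeom2F1_def hypergeom2F1_coeff_def summable_sums)
qed

lemma eventually_nhds_0_norm_less_1: "eventually (\<lambda>z::complex. norm z < 1) (nhds 0)"
  using eventually_nhds_in_open[of "ball 0 1" 0] by (auto elim!: eventually_mono)

lemma ellK_sqrt_has_fps_expansion:
  "ellK_sqrt has_fps_expansion fps_const (of_real (pi / 2)) * Abs_fps ellK_coeff"
proof (rule has_fps_expansionI)
  show "eventually (\<lambda>z. (\<lambda>n. fps_nth (fps_const (of_real (pi / 2))
      * Abs_fps ellK_coeff) n * z ^ n) sums ellK_sqrt z) (nhds 0)"
    using eventually_nhds_0_norm_less_1
  proof (rule eventually_mono)
    fix z :: complex
    assume "norm z < 1"
    from sums_mult[OF ellK_coeff_sums[OF this], of "of_real (pi / 2)"]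
    show "(\<lambda>n. fps_nth (fps_const (of_real (pi / 2))
      * Abs_fps ellK_coeff) n * z ^ n) sums ellK_sqrt z"
      by (simp add: ellK_sqrt_def mult.assoc)
  qed
qed

lemma exp_times_ellK_sqrt_coeffs:
  fixes p :: complex and u :: "nat \<Rightarrow> complex"
  assumes "\<And>z::complex. norm z < 1 \<Longrightarrow>
             (\<lambda>n. of_real (pi / 2) * u n * z ^ n) sums (exp (p * z) * ellK_sqrt z)"
  shows "Abs_fps u = fps_exp p * Abs_fps ellK_coeff"
proof -
  have "(\<lambda>z. exp (p * z) * ellK_sqrt z) has_fps_expansion fps_const (of_real (pi / 2)) * Abs_fps u"
  proof (rule has_fps_expansionI)
    show "eventually (\<lambda>z. (\<lambda>n. fps_nth (fps_const (of_real (pi / 2)) * Abs_fps u) n * z ^ n)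
        sums (exp (p * z) * ellK_sqrt z)) (nhds 0)"
      using eventually_nhds_0_norm_less_1
    proof (rule eventually_mono)
      fix z :: complex
      assume "norm z < 1"
      with assms show "(\<lambda>n. fps_nth (fps_const (of_real (pi / 2)) * Abs_fps u) n * z ^ n)
          sums (exp (p * z) * ellK_sqrt z)"
        by simp
    qed
  qed
  moreover have "(\<lambda>z. exp (p * z) * ellK_sqrt z) has_fps_expansion
      fps_exp p * (fps_const (of_real (pi / 2)) * Abs_fps ellK_coeff)"
    by (intro has_fps_expansion_mult has_fps_expansion_exp ellK_sqrt_has_fps_expansion)
  ultimately have "fps_const (of_real (pi / 2)) * Abs_fps u
      = fps_exp p * (fps_const (of_real (pi / 2)) * Abs_fps ellK_coeff)"
    by (rule fps_expansion_unique_complex)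
  then show ?thesis
    by (simp add: mult.left_commute[of "fps_exp p"])
qed

lemma fps_exp_times_ellK_coeff_rec:
  fixes p :: complex
  assumes u: "Abs_fps u = fps_exp p * Abs_fps ellK_coeff" and n: "2 \<le> n"
  shows "u (n + 1) = (2 * of_nat n + 1) * (2 * of_nat n + 4 * p + 1) / (4 * (of_nat n + 1) ^ 2) * u n
                     - p * (2 * of_nat n + p) / (of_nat n + 1) ^ 2 * u (n - 1)
                     + p ^ 2 / (of_nat n + 1) ^ 2 * u (n - 2)"
proof -
  define q where "q = (of_nat n + 1 :: complex)"
  have "q \<noteq> 0"
    unfolding q_def by (metis of_nat_Suc of_nat_neq_0 add.commute)
  have "(of_nat n + 1/2) * (of_nat n + 1/2) + p * (2 * of_nat n + 1)
      = (2 * of_nat n + 1) * (2 * of_nat n + 4 * p + 1) / 4"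
    by (simp add: field_simps)
  with fps_exp_times_hypergeom2F1_rec[OF one_notin_nonpos_Ints u n]
  have "q\<^sup>2 * u (n + 1) = (2 * of_nat n + 1) * (2 * of_nat n + 4 * p + 1) / 4 * u n
      - p * (2 * of_nat n + p) * u (n - 1) + p\<^sup>2 * u (n - 2)"
    by (simp add: q_def power2_eq_square)
  with \<open>q \<noteq> 0\<close> have "u (n + 1) = ((2 * of_nat n + 1) * (2 * of_nat n + 4 * p + 1) / 4 * u n
      - p * (2 * of_nat n + p) * u (n - 1) + p\<^sup>2 * u (n - 2)) / q\<^sup>2"
    by (simp add: eq_divide_eq mult.commute)
  then show ?thesis
    unfolding q_def[symmetric] by (simp add: add_divide_distrib diff_divide_distrib)
qed

lemma fps_exp_times_ellK_coeff_initial: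
  fixes p :: complex
  assumes u: "Abs_fps u = fps_exp p * Abs_fps ellK_coeff"
  shows "u 0 = 1" "u 1 = (4 * p + 1) / 4" "u 2 = (32 * p ^ 2 + 16 * p + 9) / 64"
proof -
  have u_conv: "u n = (\<Sum>i=0..n. p ^ i / fact i * ellK_coeff (n - i))" for n
    using arg_cong[OF u, of "\<lambda>f. fps_nth f n"] by (simp add: fps_mult_nth)
  have K1: "ellK_coeff 1 = 1/4"
    by (simp add: hypergeom2F1_coeff_def)
  have K2: "ellK_coeff 2 = 9/64"
    by (simp add: hypergeom2F1_coeff_def eval_nat_numeral pochhammer_rec')
  show "u 0 = 1"
    using u_conv[of 0] by simp
  show "u 1 = (4 * p + 1) / 4"
    using u_conv[of 1] K1 by simp
  show "u 2 = (32 * p ^ 2 + 16 * p + 9) / 64"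
  proof -
    have "u 2 = p\<^sup>2 / 2 + p * ellK_coeff 1 + ellK_coeff 2"
      using u_conv[of 2] by (simp add: eval_nat_numeral power2_eq_square)
    then show ?thesis
      unfolding K1 K2 by (simp add: field_simps)
  qed
qed

theorem corollary4p1:
  fixes p :: complex and u :: "nat \<Rightarrow> complex"
  assumes "\<And>z::complex. norm z < 1 \<Longrightarrow>
             (\<lambda>n. of_real (pi / 2) * u n * z ^ n) sums (exp (p * z) * ellK_sqrt z)"
  shows "u 0 = 1 \<and> u 1 = (4 * p + 1) / 4 \<and> u 2 = (32 * p ^ 2 + 16 * p + 9) / 64 \<and>
         (\<forall>n::nat. n \<ge> 2 \<longrightarrow>
           u (n + 1) = (2 * of_nat n + 1) * (2 * of_nat n + 4 * p + 1) / (4 * (of_nat n + 1) ^ 2) * u n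
                       - p * (2 * of_nat n + p) / (of_nat n + 1) ^ 2 * u (n - 1)
                       + p ^ 2 / (of_nat n + 1) ^ 2 * u (n - 2))"
proof -
  have u: "Abs_fps u = fps_exp p * Abs_fps ellK_coeff"
    by (rule exp_times_ellK_sqrt_coeffs[OF assms])
  show ?thesis
    using fps_exp_times_ellK_coeff_initial[OF u] fps_exp_times_ellK_coeff_rec[OF u] by blast
qed

end
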